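(* Let $A \in {\operatorname{\mathsf{TPD}}}_n(\mathbb{S}_{\max}^{\vee})$. The diagonal elements of $A$ are precisely the $\mathbb{S}_{\max}$-eigenvalues of $A$, counted with multiplicities.
   Context: Let $\Gamma$ be a divisible totally ordered abelian group, $\mathbb{T}_{\max}=\Gamma\cup\{\bot\}$ the tropical semifield (addition $\max$, multiplication $+$), and $\mathbb{S}_{\max}=\mathbb{S}_{\max}(\Gamma)$ the symmetrized tropical semiring, with zero element $\mathbf{0}$, unit element $\mathbf{1}$, minus operator $\ominus$, modulus $|\cdot|$ and balance operator $a^\circ=a\ominus a$. Every element of $\mathbb{S}_{\max}$ is positive ($c$, $c\in\Gamma$), negative ($\ominus c$), balanced ($c^\circ$) or $\mathbf{0}$; $\mathbb{S}_{\max}^\vee$ denotes the signed elements (positive, negative or $\mathbf{0}$), $\mathbb{S}_{\max}^\oplus$ the positive elements together with $\mathbf{0}$, $\mathbb{S}_{\max}^\circ$ the balanced elements. The balance relation is $a\,\nabla\, b$ iff $a\ominus b\in\mathbb{S}_{\max}^\circ$. We write $a<b$ iff $b\ominus a\in\mathbb{S}_{\max}^\oplus\setminus\{\mathbf{0}\}$. A symmetric matrix $A=(a_{ij})\in(\mathbb{S}_{\max}^\vee)^{n\times n}$ is tropical positive definite, $A\in{\operatorname{\mathsf{TPD}}}_n(\mathbb{S}_{\max}^\vee)$, if $\mathbf{0}<x^TAx$ for all $x\in(\mathbb{S}_{\max}^\vee)^n\setminus\{\mathbf{0}\}$ (equivalently $\mathbf{0}<a_{ii}$ for all $i$ and $a_{ij}^2<a_{ii}a_{jj}$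 for $i\neq j$). The determinant is $\det(A)=\bigoplus_{\pi}\mathrm{sgn}(\pi)\prod_i a_{i\pi(i)}$ with $\mathrm{sgn}(\pi)\in\{\mathbf{1},\ominus\mathbf{1}\}$. The characteristic polynomial is $P_A=\det(\mathsf{X} I\ominus A)$; an $\mathbb{S}_{\max}$-eigenvalue of $A$ is a $\gamma\in\mathbb{S}_{\max}^\vee$ with $\det(\gamma I\ominus A)\,\nabla\,\mathbf{0}$. When $P_A$ has coefficients in $\mathbb{S}_{\max}^\vee$ (which holds for ${\operatorname{\mathsf{TPD}}}$ matrices), the multiplicity of a root $r$ is defined recursively by $\mathrm{mult}_r(P)=0$ if $r$ is not a root, and otherwise $\mathrm{mult}_r(P)=1+\max\{\mathrm{mult}_r(Q): Q\text{ with coefficients in }\mathbb{S}_{\max}^\vee,\ P\,\nabla\,(\mathsf{X}\ominus r)Q\}$ (coefficientwise balance). *)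

theory Defs
  imports "HOL-Combinatorics.Permutations" "HOL-Computational_Algebra.Polynomial"
begin

text \<open>Gamma is a totally ordered abelian group (written additively); divisibility is
  an explicit hypothesis. Elements of S_max: zero, positive c, negative (minus c),
  balanced c-circ.\<close>

definition divisible_group :: "'g::linordered_ab_group_add itself \<Rightarrow> bool" where
  "divisible_group _ \<longleftrightarrow> (\<forall>x::'g. \<forall>m::nat. m > 0 \<longrightarrow> (\<exists>y. (\<Sum>_<m. y) = x))"

datatype 'g smax = SZero | Pos 'g | Neg 'g | Bal 'g

fun smod :: "'g smax \<Rightarrow> 'g" where
  "smod (Pos c) = c" | "smod (Neg c) = c" | "smod (Bal c) = c" | "smod SZero = undefined"

fun sminus :: "'g smax \<Rightarrow> 'g smax" where
  "sminus SZero = SZero" | "sminus (Pos c) = Neg c" | "sminus (Neg c) = Pos c"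
| "sminus (Bal c) = Bal c"

definition sadd :: "'g::linorder smax \<Rightarrow> 'g smax \<Rightarrow> 'g smax" where
  "sadd a b = (if a = SZero then b else if b = SZero then a
     else if smod a < smod b then b else if smod b < smod a then a
     else if a = b then a else Bal (smod a))"

fun smul :: "'g::ab_group_add smax \<Rightarrow> 'g smax \<Rightarrow> 'g smax" where
  "smul SZero b = SZero"
| "smul a SZero = SZero"
| "smul (Pos c) (Pos d) = Pos (c + d)"
| "smul (Pos c) (Neg d) = Neg (c + d)"
| "smul (Neg c) (Pos d) = Neg (c + d)"
| "smul (Neg c) (Neg d) = Pos (c + d)"
| "smul a b = Bal (smod a + smod b)"

instantiation smax :: (linordered_ab_group_add) comm_semiring_1
begin
definition "zero_smax = SZero"
definition "one_smax = Pos 0"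
definition "plus_smax = sadd"
definition "times_smax = smul"
instance
proof
  fix a b c :: "'a smax"
  show "a + b + c = a + (b + c)"
    by (cases a; cases b; cases c) (auto simp: plus_smax_def sadd_def)
  show "a + b = b + a"
    by (cases a; cases b) (auto simp: plus_smax_def sadd_def)
  show "0 + a = a" by (simp add: plus_smax_def sadd_def zero_smax_def)
  show "a * b * c = a * (b * c)"
    by (cases a; cases b; cases c) (auto simp: times_smax_def add.assoc)
  show "a * b = b * a"
    by (cases a; cases b) (auto simp: times_smax_def add.commute)
  show "1 * a = a" by (cases a) (auto simp: times_smax_def one_smax_def)
  show "0 * a = 0" by (simp add: times_smax_def zero_smax_def)
  show "a * 0 = 0" by (cases a) (simp_all add: times_smax_def zero_smax_def)
  show "(0::'a smax) \<noteq> 1" by (simp add: zero_smax_def one_smax_def)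
  show "(a + b) * c = a * c + b * c"
    by (cases a; cases b; cases c)
       (auto simp: times_smax_def plus_smax_def sadd_def add_strict_right_mono)
qed
end

definition signed :: "'g smax \<Rightarrow> bool" where
  "signed a \<longleftrightarrow> (\<forall>c. a \<noteq> Bal c)"

definition balanced :: "'g smax \<Rightarrow> bool" where
  "balanced a \<longleftrightarrow> a = SZero \<or> (\<exists>c. a = Bal c)"

definition bal_rel :: "'g::linordered_ab_group_add smax \<Rightarrow> 'g smax \<Rightarrow> bool" (infix "\<nabla>" 50) where
  "a \<nabla> b \<longleftrightarrow> balanced (a + sminus b)"

definition sless :: "'g::linordered_ab_group_add smax \<Rightarrow> 'g smax \<Rightarrow> bool" where
  "sless a b \<longleftrightarrow> (\<exists>c. b + sminus a = Pos c)"

text \<open>n x n matrices are functions nat => nat => _ restricted to indices below n.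
  Generic determinant over a commutative semiring, with a given minus operator
  used for the sign of odd permutations.\<close>

definition det_gen :: "('a::comm_semiring_1 \<Rightarrow> 'a) \<Rightarrow> (nat \<Rightarrow> nat \<Rightarrow> 'a) \<Rightarrow> nat \<Rightarrow> 'a" where
  "det_gen neg A n = (\<Sum>p\<in>{p. p permutes {..<n}}.
      (if evenperm p then 1 else neg 1) * (\<Prod>i<n. A i (p i)))"

definition sdet :: "(nat \<Rightarrow> nat \<Rightarrow> 'g::linordered_ab_group_add smax) \<Rightarrow> nat \<Rightarrow> 'g smax" where
  "sdet A n = det_gen sminus A n"

definition qform :: "(nat \<Rightarrow> nat \<Rightarrow> 'g::linordered_ab_group_add smax) \<Rightarrow> nat \<Rightarrow> (nat \<Rightarrow> 'g smax) \<Rightarrow> 'g smax" where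
  "qform A n x = (\<Sum>i<n. \<Sum>j<n. x i * A i j * x j)"

definition TPD :: "nat \<Rightarrow> (nat \<Rightarrow> nat \<Rightarrow> 'g::linordered_ab_group_add smax) set" where
  "TPD n = {A. (\<forall>i<n. \<forall>j<n. signed (A i j) \<and> A i j = A j i) \<and>
      (\<forall>x. (\<forall>i<n. signed (x i)) \<and> (\<exists>i<n. x i \<noteq> 0) \<longrightarrow> sless 0 (qform A n x))}"

definition s_eigenvalue :: "(nat \<Rightarrow> nat \<Rightarrow> 'g::linordered_ab_group_add smax) \<Rightarrow> nat \<Rightarrow> 'g smax \<Rightarrow> bool" where
  "s_eigenvalue A n \<gamma> \<longleftrightarrow> signed \<gamma> \<and>
     sdet (\<lambda>i j. (if i = j then \<gamma> else 0) + sminus (A i j)) n \<nabla> 0"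

definition pminus :: "'g::linordered_ab_group_add smax poly \<Rightarrow> 'g smax poly" where
  "pminus p = map_poly sminus p"

definition charpoly :: "(nat \<Rightarrow> nat \<Rightarrow> 'g::linordered_ab_group_add smax) \<Rightarrow> nat \<Rightarrow> 'g smax poly" where
  "charpoly A n = det_gen pminus (\<lambda>i j. (if i = j then [:0, 1:] else 0) + [:sminus (A i j):]) n"

definition signed_poly :: "'g::linordered_ab_group_add smax poly \<Rightarrow> bool" where
  "signed_poly P \<longleftrightarrow> (\<forall>k. signed (coeff P k))"

definition poly_bal :: "'g::linordered_ab_group_add smax poly \<Rightarrow> 'g smax poly \<Rightarrow> bool" where
  "poly_bal P Q \<longleftrightarrow> (\<forall>k. coeff P k \<nabla> coeff Q k)"

definition is_sroot :: "'g::linordered_ab_group_add smax poly \<Rightarrow> 'g smax \<Rightarrow> bool" where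
  "is_sroot P r \<longleftrightarrow> signed r \<and> poly P r \<nabla> 0"

text \<open>mult_ge P r k: the recursive multiplicity of r in P is at least k.
  mult_r(P) = 0 if r is not a root, otherwise 1 + max of mult_r(Q) over signed Q with
  P balancing (X minus r) Q (max of the empty set read as 0).\<close>
inductive mult_ge :: "'g::linordered_ab_group_add smax poly \<Rightarrow> 'g smax \<Rightarrow> nat \<Rightarrow> bool" where
  mult_ge_0: "mult_ge P r 0"
| mult_ge_1: "is_sroot P r \<Longrightarrow> mult_ge P r (Suc 0)"
| mult_ge_Suc: "is_sroot P r \<Longrightarrow> signed_poly Q \<Longrightarrow> poly_bal P ([:sminus r, 1:] * Q) \<Longrightarrow>
     mult_ge Q r k \<Longrightarrow> mult_ge P r (Suc k)"

definition root_mult :: "'g::linordered_ab_group_add smax poly \<Rightarrow> 'g smax \<Rightarrow> nat" where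
  "root_mult P r = (GREATEST k. mult_ge P r k)"

end

theory Submission
  imports Defs
begin

text \<open>
  Tropical positive definiteness says 2|a_ij| < |a_ii| + |a_jj|, so along every cycle of a
  permutation the off-diagonal entries weigh strictly less than the diagonal ones. Hence in
  det(X I \<ominus> A) every non-identity term is absorbed, coefficientwise, by the diagonal term,
  and P_A = (X \<ominus> a_11) \<dots> (X \<ominus> a_nn) exactly; its roots are the a_ii.

  For multiplicities, evaluate the terms p_k c^k of a signed polynomial at a positive c and
  look at those of maximal modulus. A root forces two of them, and every balance
  P \<nabla> (X \<ominus> c) Q moves the extreme indices of these dominant terms one step further apart
  than in Q. In (X \<ominus> a_11) \<dots> (X \<ominus> a_nn) the dominant indices lie in an interval of
  length #{i. a_ii = c}, which bounds the multiplicity; peeling off the factors X \<ominus> c one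
  at a time gives the matching lower bound.
\<close>

lemma plus_smax_simps [simp]:
  fixes a b :: "'g::linordered_ab_group_add"
  shows "SZero + x = x" "x + SZero = x"
    "Pos a + Pos b = Pos (max a b)" "Neg a + Neg b = Neg (max a b)" "Bal a + Bal b = Bal (max a b)"
    "Pos a + Neg b = (if a < b then Neg b else if b < a then Pos a else Bal a)"
    "Neg a + Pos b = (if a < b then Pos b else if b < a then Neg a else Bal a)"
    "Bal a + Pos b = (if a < b then Pos b else Bal a)" "Pos b + Bal a = (if a < b then Pos b else Bal a)"
    "Bal a + Neg b = (if a < b then Neg b else Bal a)" "Neg b + Bal a = (if a < b then Neg b else Bal a)"
  by (auto simp: plus_smax_def sadd_def max_def)

lemma times_smax_simps [simp]:
  fixes a b :: "'g::linordered_ab_group_add"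
  shows "SZero * x = SZero" "x * SZero = SZero"
    "Pos a * Pos b = Pos (a + b)" "Pos a * Neg b = Neg (a + b)"
    "Neg a * Pos b = Neg (a + b)" "Neg a * Neg b = Pos (a + b)"
    "Bal a * x = (if x = SZero then SZero else Bal (a + smod x))"
    "x * Bal a = (if x = SZero then SZero else Bal (smod x + a))"
  by (cases x; simp add: times_smax_def)+

lemma smax_constructors_ne_0 [simp]:
  "Pos c \<noteq> (0::'g::linordered_ab_group_add smax)" "Neg c \<noteq> 0" "Bal c \<noteq> 0"
  by (simp_all add: zero_smax_def)

instance smax :: (linordered_ab_group_add) semiring_no_zero_divisors
proof
  fix x y :: "'a smax"
  show "x \<noteq> 0 \<Longrightarrow> y \<noteq> 0 \<Longrightarrow> x * y \<noteq> 0"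
    by (cases x; cases y) (simp_all add: zero_smax_def)
qed

instance smax :: (linordered_ab_group_add) semiring_1_no_zero_divisors ..

lemma smod_one [simp]: "smod (1::'g::linordered_ab_group_add smax) = 0"
  by (simp add: one_smax_def)

lemma smod_mult:
  "(x::'g::linordered_ab_group_add smax) \<noteq> 0 \<Longrightarrow> y \<noteq> 0 \<Longrightarrow> smod (x * y) = smod x + smod y"
  by (cases x; cases y) (simp_all add: zero_smax_def)

lemma smod_prod:
  fixes f :: "'i \<Rightarrow> 'g::linordered_ab_group_add smax"
  assumes "\<forall>i\<in>S. f i \<noteq> 0"
  shows "prod f S \<noteq> 0 \<and> smod (prod f S) = (\<Sum>i\<in>S. smod (f i))"
proof (cases "finite S")
  case True
  then show ?thesis
    using assms by (induction S rule: finite_induct) (simp_all add: smod_mult)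
qed simp

lemma smod_sminus [simp]: "smod (sminus x) = smod x"
  by (cases x) simp_all

lemma sminus_eq_0_iff [simp]: "sminus (x::'g::linordered_ab_group_add smax) = 0 \<longleftrightarrow> x = 0"
  by (cases x) (simp_all add: zero_smax_def)

lemma sminus_mult: "sminus ((x::'g::linordered_ab_group_add smax) * y) = sminus x * y"
  by (cases x; cases y) simp_all

lemma Neg_mult: "Neg c * x = sminus (Pos c * (x::'g::linordered_ab_group_add smax))"
  by (cases x) simp_all

lemma signed_Pos [simp]: "signed (Pos c)"
  by (simp add: signed_def)

lemma signed_sminus [simp]: "signed (sminus x) = signed x"
  by (cases x) (simp_all add: signed_def)

lemma signed_mult: "signed (x::'g::linordered_ab_group_add smax) \<Longrightarrow> signed y \<Longrightarrow> signed (x * y)"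
  by (cases x; cases y) (simp_all add: signed_def)

lemma balanced_mult:
  "balanced ((x::'g::linordered_ab_group_add smax) * y) \<longleftrightarrow> balanced x \<or> balanced y"
  by (cases x; cases y) (auto simp: balanced_def)

lemma balanced_prod:
  fixes f :: "'i \<Rightarrow> 'g::linordered_ab_group_add smax"
  assumes "finite S"
  shows "balanced (prod f S) \<longleftrightarrow> (\<exists>i\<in>S. balanced (f i))"
  using assms by (induction S rule: finite_induct)
    (simp_all add: balanced_mult, simp add: one_smax_def balanced_def)

lemma signed_balanced_iff_0: "signed x \<Longrightarrow> balanced x \<longleftrightarrow> x = 0"
  by (cases x) (simp_all add: signed_def balanced_def zero_smax_def)

lemma bal_refl: "(x::'g::linordered_ab_group_add smax) \<nabla> x"
  by (cases x) (simp_all add: bal_rel_def balanced_def)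

lemma bal_mult: "(x::'g::linordered_ab_group_add smax) \<nabla> y \<Longrightarrow> x * z \<nabla> y * z"
  unfolding bal_rel_def by (metis balanced_mult distrib_right sminus_mult)

lemma bal_signed_eq:
  "signed (x::'g::linordered_ab_group_add smax) \<Longrightarrow> signed y \<Longrightarrow> x \<nabla> y \<Longrightarrow> x = y"
  by (cases x; cases y) (auto simp: bal_rel_def balanced_def signed_def split: if_splits)

lemma add_sum_idem:
  fixes x :: "'a::comm_monoid_add"
  assumes "finite S" "\<forall>k\<in>S. x + f k = x"
  shows "x + sum f S = x"
  using assms by (induction S rule: finite_induct) (simp_all flip: add.assoc)

section \<open>Comparing moduli\<close>

definition mod_le :: "'g::linordered_ab_group_add smax \<Rightarrow> 'g smax \<Rightarrow> bool" where
  "mod_le x y \<longleftrightarrow> x = 0 \<or> (y \<noteq> 0 \<and> smod x \<le> smod y)"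

lemma mod_le_iff_smod: "x \<noteq> 0 \<Longrightarrow> y \<noteq> 0 \<Longrightarrow> mod_le x y \<longleftrightarrow> smod x \<le> smod y"
  by (simp add: mod_le_def)

lemma mod_le_refl [simp]: "mod_le x x"
  by (simp add: mod_le_def)

lemma mod_le_trans: "mod_le x y \<Longrightarrow> mod_le y z \<Longrightarrow> mod_le x z"
  unfolding mod_le_def by auto

lemma mod_le_total: "mod_le x y \<or> mod_le y x"
  unfolding mod_le_def by auto

lemma mod_le_0_left [simp]: "mod_le 0 y"
  by (simp add: mod_le_def)

lemma mod_le_0_right [simp]: "mod_le x 0 \<longleftrightarrow> x = 0"
  by (simp add: mod_le_def)

lemma mod_le_sminus_iff [simp]:
  "mod_le (sminus x) y \<longleftrightarrow> mod_le x y" "mod_le x (sminus y) \<longleftrightarrow> mod_le x y"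
  by (simp_all add: mod_le_def)

lemma mod_le_add_iff: "mod_le (x + y) z \<longleftrightarrow> mod_le x z \<and> mod_le y z"
  by (cases x; cases y; cases z) (auto simp: mod_le_def zero_smax_def)

lemma mod_le_add_cases: "mod_le (x + y) x \<or> mod_le (x + y) y"
  by (cases x; cases y) (auto simp: mod_le_def zero_smax_def)

lemma mod_le_add_left: "mod_le x (x + y)"
  by (cases x; cases y) (auto simp: mod_le_def zero_smax_def)

lemma mod_le_add_right: "mod_le y (x + y)"
  using mod_le_add_left by (metis add.commute)

lemma add_absorb: "\<not> mod_le x y \<Longrightarrow> x + y = x"
  by (cases x; cases y) (auto simp: mod_le_def zero_smax_def)

lemma mod_le_sum: "finite S \<Longrightarrow> k \<in> S \<Longrightarrow> mod_le (f k) (sum f S)"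
  by (metis mod_le_add_left sum.remove)

lemma mod_le_mult_right: "mod_le x y \<Longrightarrow> mod_le (x * z) (y * z)"
  by (cases "z = 0") (auto simp: mod_le_def smod_mult)

lemma mod_le_mult_left: "mod_le x y \<Longrightarrow> mod_le (z * x) (z * y)"
  using mod_le_mult_right by (metis mult.commute)

lemma mod_le_mult_cancel_right: "z \<noteq> 0 \<Longrightarrow> mod_le (x * z) (y * z) \<longleftrightarrow> mod_le x y"
  by (auto simp: mod_le_def smod_mult)

lemma mod_le_mult_cancel_left: "z \<noteq> 0 \<Longrightarrow> mod_le (z * x) (z * y) \<longleftrightarrow> mod_le x y"
  using mod_le_mult_cancel_right by (metis mult.commute)

lemma mod_le_Pos_mult_iff: "x \<noteq> 0 \<Longrightarrow> mod_le (Pos c * x) (Pos e * x) \<longleftrightarrow> c \<le> e"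
  by (cases x) (auto simp: mod_le_def zero_smax_def)

lemma mod_le_if_bal: "signed x \<Longrightarrow> x \<nabla> y \<Longrightarrow> mod_le x y"
  by (cases x; cases y)
    (auto simp: bal_rel_def balanced_def signed_def mod_le_def zero_smax_def split: if_splits)

lemma mult_add_smult_absorb:
  fixes R S :: "'g::linordered_ab_group_add smax poly"
  assumes "\<not> mod_le (coeff R 0) c"
  shows "R * S + smult c S = R * S"
proof (rule poly_eqI)
  fix k
  show "coeff (R * S + smult c S) k = coeff (R * S) k"
  proof (cases "coeff S k = 0")
    case False
    have "mod_le (coeff R 0 * coeff S k) (coeff (R * S) k)"
      unfolding coeff_mult using mod_le_sum[of "{..k}" 0 "\<lambda>j. coeff R j * coeff S (k - j)"] by simp
    moreover have "\<not> mod_le (coeff R 0 * coeff S k) (c * coeff S k)"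
      using assms False by (simp add: mod_le_mult_cancel_right)
    ultimately have "\<not> mod_le (coeff (R * S) k) (c * coeff S k)"
      using mod_le_trans by blast
    then show ?thesis
      by (simp add: add_absorb)
  qed simp
qed

section \<open>Dominant terms of a polynomial at a positive point\<close>

definition pterm :: "'a::comm_semiring_1 poly \<Rightarrow> 'a \<Rightarrow> nat \<Rightarrow> 'a" where
  "pterm P x k = coeff P k * x ^ k"

lemma poly_eq_sum_pterm: "poly P x = (\<Sum>k\<le>degree P. pterm P x k)"
  by (simp add: pterm_def poly_altdef)

lemma pterm_beyond_degree: "degree P < k \<Longrightarrow> pterm P x k = 0"
  by (simp add: pterm_def coeff_eq_0)

lemma pterm_bal: "poly_bal P R \<Longrightarrow> pterm P x k \<nabla> pterm R x k"
  unfolding poly_bal_def pterm_def by (simp add: bal_mult)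

lemma pterm_linear_factor:
  "pterm ([:r, 1:] * Q) x k = r * pterm Q x k + (if k = 0 then 0 else x * pterm Q x (k - 1))"
  by (cases k) (simp_all add: pterm_def algebra_simps)

lemma pterm_Pos_linear_factor:
  "pterm ([:Neg e, 1:] * Q) (Pos c) k =
     sminus (Pos e * pterm Q (Pos c) k) + (if k = 0 then 0 else Pos c * pterm Q (Pos c) (k - 1))"
  by (simp only: pterm_linear_factor Neg_mult)

lemma Pos_power: "\<exists>d. (Pos c :: 'g::linordered_ab_group_add smax) ^ k = Pos d"
  by (induction k) (auto simp: one_smax_def)

lemma signed_pterm_Pos: "signed_poly P \<Longrightarrow> signed (pterm P (Pos c) k)"
  using Pos_power[of c k] signed_mult[of "coeff P k" "Pos c ^ k"]
  by (auto simp: signed_poly_def pterm_def signed_def)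

lemma pterm_Pos_eq_0_iff: "pterm P (Pos c) k = 0 \<longleftrightarrow> coeff P k = 0"
  by (simp add: pterm_def)

definition dominant :: "(nat \<Rightarrow> 'g::linordered_ab_group_add smax) \<Rightarrow> nat \<Rightarrow> bool" where
  "dominant t k \<longleftrightarrow> t k \<noteq> 0 \<and> (\<forall>j. mod_le (t j) (t k))"

lemma dominant_iff_mod_le:
  assumes "dominant t a"
  shows "dominant t k \<longleftrightarrow> mod_le (t a) (t k)"
proof
  assume "mod_le (t a) (t k)"
  moreover have "t a \<noteq> 0" "\<forall>j. mod_le (t j) (t a)"
    using assms by (simp_all add: dominant_def)
  ultimately show "dominant t k"
    unfolding dominant_def by (metis mod_le_0_right mod_le_trans)
qed (simp add: dominant_def)

lemma ex_mod_le_max: "\<exists>k\<le>(N::nat). \<forall>j\<le>N. mod_le (t j) (t k)"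
proof (induction N)
  case (Suc N)
  then obtain k where k: "k \<le> N" "\<forall>j\<le>N. mod_le (t j) (t k)"
    by blast
  have "\<exists>m\<in>{k, Suc N}. \<forall>j\<le>Suc N. mod_le (t j) (t m)"
  proof (cases "mod_le (t (Suc N)) (t k)")
    case True
    then show ?thesis
      using k(2) by (auto simp: le_Suc_eq)
  next
    case False
    then have "mod_le (t k) (t (Suc N))"
      using mod_le_total by blast
    then show ?thesis
      using k(2) mod_le_trans by (auto simp: le_Suc_eq)
  qed
  then show ?case
    using k(1) le_SucI by blast
qed simp

lemma ex_dominant:
  assumes "\<forall>j>N. t j = 0" "t i \<noteq> 0"
  shows "\<exists>k. dominant t k"
proof -
  obtain k where k: "k \<le> N" "\<forall>j\<le>N. mod_le (t j) (t k)"
    using ex_mod_le_max by blast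
  have max: "mod_le (t j) (t k)" for j
    using k(2) assms(1) by (cases "j \<le> N") auto
  moreover have "t k \<noteq> 0"
    using max[of i] assms(2) by auto
  ultimately show ?thesis
    unfolding dominant_def by blast
qed

lemma ex_dominant_pterm: "P \<noteq> 0 \<Longrightarrow> \<exists>k. dominant (pterm P (Pos c)) k"
  by (rule ex_dominant[of "degree P" _ "degree P"])
    (simp_all add: pterm_beyond_degree pterm_Pos_eq_0_iff)

lemma dominant_pterm_le_degree: "dominant (pterm P x) k \<Longrightarrow> k \<le> degree P"
  by (metis dominant_def not_le pterm_beyond_degree)

lemma ex_least_dominant:
  assumes "dominant t a"
  shows "\<exists>a0\<le>a. dominant t a0 \<and> (\<forall>j<a0. \<not> dominant t j)"
proof -
  let ?a0 = "LEAST j. dominant t j"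
  have "?a0 \<le> a" "dominant t ?a0"
    using assms by (rule Least_le, rule LeastI)
  moreover have "\<forall>j<?a0. \<not> dominant t j"
    using not_less_Least by blast
  ultimately show ?thesis
    by blast
qed

lemma ex_greatest_dominant_pterm:
  assumes "dominant (pterm P x) b"
  shows "\<exists>b0\<ge>b. dominant (pterm P x) b0 \<and> (\<forall>j>b0. \<not> dominant (pterm P x) j)"
proof -
  have "\<forall>j. dominant (pterm P x) j \<longrightarrow> j \<le> degree P"
    using dominant_pterm_le_degree by blast
  then obtain b0 where "dominant (pterm P x) b0" "\<forall>j. dominant (pterm P x) j \<longrightarrow> j \<le> b0"
    using Nat.ex_has_greatest_nat[where P = "dominant (pterm P x)", OF assms] by blast
  then show ?thesis
    using assms by (auto dest: leD)
qed

lemma dominant_top_term: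
  assumes a: "dominant t a"
    and "mod_le (Pos x * t a) (Pos y * t k)" "mod_le (Pos y * t a) (Pos y * t k)"
  shows "dominant t k \<and> x \<le> y"
proof
  show "dominant t k"
    using assms(3) dominant_iff_mod_le[OF a] by (simp add: mod_le_mult_cancel_left)
  then have "mod_le (Pos y * t k) (Pos y * t a)"
    using a by (simp add: dominant_def mod_le_mult_left)
  then have "mod_le (Pos x * t a) (Pos y * t a)"
    using mod_le_trans[OF assms(2)] by blast
  moreover have "t a \<noteq> 0"
    using a by (simp add: dominant_def)
  ultimately show "x \<le> y"
    by (simp add: mod_le_Pos_mult_iff)
qed

lemma dominant_pterm_linear_factor_cases:
  fixes Q :: "'g::linordered_ab_group_add smax poly"
  assumes "Q \<noteq> 0" and dom: "dominant (pterm ([:Neg e, 1:] * Q) (Pos c)) k"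
  shows "(c \<le> e \<and> dominant (pterm Q (Pos c)) k) \<or>
    (e \<le> c \<and> k \<noteq> 0 \<and> dominant (pterm Q (Pos c)) (k - 1))"
proof -
  let ?t = "pterm Q (Pos c)"
  define u where "u k = sminus (Pos e * ?t k) + (if k = 0 then 0 else Pos c * ?t (k - 1))" for k
  have u_eq: "pterm ([:Neg e, 1:] * Q) (Pos c) = u"
    by (rule ext) (simp only: pterm_Pos_linear_factor u_def)
  obtain a where a: "dominant ?t a"
    using ex_dominant_pterm assms(1) by blast
  have u_k: "u k \<noteq> 0" "\<forall>j. mod_le (u j) (u k)"
    using dom unfolding u_eq dominant_def by simp_all
  have "mod_le (Pos e * ?t a) (u a)"
    unfolding u_def using mod_le_add_left[of "sminus (Pos e * ?t a)"] by simp
  then have e_a: "mod_le (Pos e * ?t a) (u k)"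
    using u_k(2) mod_le_trans by blast
  have "mod_le (Pos c * ?t a) (u (Suc a))"
    unfolding u_def using mod_le_add_right[of "Pos c * ?t a"] by simp
  then have c_a: "mod_le (Pos c * ?t a) (u k)"
    using u_k(2) mod_le_trans by blast
  consider "mod_le (u k) (Pos e * ?t k)" | "k \<noteq> 0" "mod_le (u k) (Pos c * ?t (k - 1))"
    using mod_le_add_cases[of "sminus (Pos e * ?t k)"] u_k(1) by (cases "k = 0") (auto simp: u_def)
  then show ?thesis
  proof cases
    case 1
    then show ?thesis
      using dominant_top_term[OF a mod_le_trans[OF c_a 1] mod_le_trans[OF e_a 1]] by blast
  next
    case 2
    then show ?thesis
      using dominant_top_term[OF a mod_le_trans[OF e_a 2(2)] mod_le_trans[OF c_a 2(2)]] by blast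
  qed
qed

section \<open>Multiplicity spreads the dominant terms\<close>

lemma is_sroot_Pos_two_dominant_pterms:
  assumes "signed_poly P" "P \<noteq> 0" "is_sroot P (Pos c)"
  shows "\<exists>a b. a < b \<and> dominant (pterm P (Pos c)) a \<and> dominant (pterm P (Pos c)) b"
proof -
  let ?t = "pterm P (Pos c)"
  obtain a where a: "dominant ?t a"
    using ex_dominant_pterm assms(2) by blast
  have "\<exists>b. b \<noteq> a \<and> dominant ?t b"
  proof (rule ccontr)
    assume "\<nexists>b. b \<noteq> a \<and> dominant ?t b"
    then have "\<forall>k\<in>{..degree P} - {a}. ?t a + ?t k = ?t a"
      using dominant_iff_mod_le[OF a] add_absorb by blast
    then have "?t a + (\<Sum>k\<in>{..degree P} - {a}. ?t k) = ?t a"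
      by (intro add_sum_idem) simp_all
    moreover have "a \<in> {..degree P}"
      using a dominant_pterm_le_degree by auto
    ultimately have "poly P (Pos c) = ?t a"
      by (simp add: poly_eq_sum_pterm sum.remove)
    then have "balanced (?t a)"
      using assms(3) by (simp add: is_sroot_def bal_rel_def zero_smax_def)
    then show False
      using a signed_pterm_Pos[OF assms(1)] signed_balanced_iff_0 by (auto simp: dominant_def)
  qed
  then show ?thesis
    using a by (metis linorder_neqE_nat)
qed

text \<open>At the least dominant index a of Q only \<ominus>c t_a, and at b + 1 for the greatest one b
  only c t_b, reaches the top modulus of (X \<ominus> c) Q; being signed, both survive the balance.\<close>

lemma dominant_pterms_balanced_root_factor:
  fixes P Q :: "'g::linordered_ab_group_add smax poly"
  assumes sP: "signed_poly P" and sQ: "signed_poly Q"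
    and bal: "poly_bal P ([:Neg c, 1:] * Q)"
    and a: "dominant (pterm Q (Pos c)) a" "\<forall>j<a. \<not> dominant (pterm Q (Pos c)) j"
    and b: "dominant (pterm Q (Pos c)) b" "\<forall>j>b. \<not> dominant (pterm Q (Pos c)) j"
  shows "dominant (pterm P (Pos c)) a \<and> dominant (pterm P (Pos c)) (Suc b)"
proof -
  let ?t = "pterm Q (Pos c)" and ?s = "pterm P (Pos c)"
  define u where "u k = sminus (Pos c * ?t k) + (if k = 0 then 0 else Pos c * ?t (k - 1))" for k
  have s_bal: "?s k \<nabla> u k" for k
    using pterm_bal[OF bal, of "Pos c" k] by (simp only: pterm_Pos_linear_factor u_def)
  have t_a: "?t a \<noteq> 0" "\<forall>j. mod_le (?t j) (?t a)"
    using a(1) by (simp_all add: dominant_def)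
  have below_a: "\<not> mod_le (Pos c * ?t a) (Pos c * ?t j)" if "j < a" for j
    using a that dominant_iff_mod_le[OF a(1)] by (simp add: mod_le_mult_cancel_left)
  have above_b: "\<not> mod_le (Pos c * ?t b) (Pos c * ?t j)" if "b < j" for j
    using b that dominant_iff_mod_le[OF b(1)] by (simp add: mod_le_mult_cancel_left)
  have u_le: "mod_le (u k) (Pos c * ?t a)" for k
    using t_a(2) by (simp add: u_def mod_le_add_iff mod_le_mult_left)
  have u_a: "u a = sminus (Pos c * ?t a)"
    using below_a[of "a - 1"] by (auto simp: u_def add_absorb)
  have u_b: "u (Suc b) = Pos c * ?t b"
    using above_b[of "Suc b"] by (auto simp: u_def add_absorb add.commute)
  have s_le: "mod_le (?s k) (u k)" for k
    using mod_le_if_bal[OF signed_pterm_Pos[OF sP] s_bal] .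
  have s_eq: "?s k = u k" if "signed (u k)" for k
    using bal_signed_eq[OF signed_pterm_Pos[OF sP] that s_bal] .
  have "signed (Pos c * ?t k)" for k
    by (rule signed_mult[OF signed_Pos signed_pterm_Pos[OF sQ]])
  then have "?s a = sminus (Pos c * ?t a)" "?s (Suc b) = Pos c * ?t b"
    using s_eq u_a u_b by simp_all
  moreover have "mod_le (Pos c * ?t a) (Pos c * ?t b)"
    using b(1) by (simp add: dominant_def mod_le_mult_left)
  moreover have "mod_le (?s k) (Pos c * ?t a)" for k
    using s_le u_le mod_le_trans by metis
  ultimately show ?thesis
    using t_a(1) mod_le_trans unfolding dominant_def by (auto simp: mult_eq_0_iff)
qed

lemma signed_poly_bal_0:
  assumes "signed_poly P" "poly_bal P 0"
  shows "P = 0"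
proof -
  have "coeff P k = 0" for k
    using assms bal_signed_eq[of "coeff P k" 0]
    by (simp add: signed_poly_def poly_bal_def signed_def zero_smax_def)
  then show ?thesis
    by (simp add: poly_eq_iff)
qed

lemma mult_ge_dominant_spread:
  fixes P :: "'g::linordered_ab_group_add smax poly"
  assumes "mult_ge P (Pos c) m" "signed_poly P" "P \<noteq> 0"
  shows "\<exists>a b. a + m \<le> b \<and> dominant (pterm P (Pos c)) a \<and> dominant (pterm P (Pos c)) b"
  using assms
proof (induction P "Pos c" m rule: mult_ge.induct)
  case (mult_ge_0 P)
  then obtain a where "dominant (pterm P (Pos c)) a"
    using ex_dominant_pterm by blast
  then show ?case
    by auto
next
  case (mult_ge_1 P)
  then obtain a b where "a < b" "dominant (pterm P (Pos c)) a" "dominant (pterm P (Pos c)) b"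
    using is_sroot_Pos_two_dominant_pterms by blast
  then show ?case
    by (auto simp: Suc_le_eq)
next
  case (mult_ge_Suc P Q m)
  let ?t = "pterm Q (Pos c)"
  have "Q \<noteq> 0"
    using mult_ge_Suc.prems mult_ge_Suc.hyps(3) signed_poly_bal_0 by fastforce
  then obtain a b where ab: "a + m \<le> b" "dominant ?t a" "dominant ?t b"
    using mult_ge_Suc.hyps(2,5) by blast
  obtain a0 where a0: "a0 \<le> a" "dominant ?t a0" "\<forall>j<a0. \<not> dominant ?t j"
    using ex_least_dominant[OF ab(2)] by blast
  obtain b0 where b0: "b \<le> b0" "dominant ?t b0" "\<forall>j>b0. \<not> dominant ?t j"
    using ex_greatest_dominant_pterm[OF ab(3)] by blast
  have "dominant (pterm P (Pos c)) a0 \<and> dominant (pterm P (Pos c)) (Suc b0)"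
    using mult_ge_Suc.prems(1) mult_ge_Suc.hyps(2) mult_ge_Suc.hyps(3)[unfolded sminus.simps]
      a0(2,3) b0(2,3)
    by (rule dominant_pterms_balanced_root_factor)
  moreover have "a0 + Suc m \<le> Suc b0"
    using a0(1) ab(1) b0(1) by linarith
  ultimately show ?case
    by blast
qed

section \<open>Products of linear factors with positive roots\<close>

definition root_poly :: "('i \<Rightarrow> 'g::linordered_ab_group_add) \<Rightarrow> 'i set \<Rightarrow> 'g smax poly" where
  "root_poly e S = (\<Prod>i\<in>S. [:Neg (e i), 1:])"

lemma root_poly_insert:
  "finite S \<Longrightarrow> x \<notin> S \<Longrightarrow> root_poly e (insert x S) = [:Neg (e x), 1:] * root_poly e S"
  by (simp add: root_poly_def)

lemma root_poly_ne_0: "root_poly e S \<noteq> 0"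
  unfolding root_poly_def
  by (cases "finite S", induction S rule: finite_induct) (simp_all del: mult_pCons_left)

lemma poly_root_poly: "poly (root_poly e S) x = (\<Prod>i\<in>S. Neg (e i) + x)"
  by (simp add: root_poly_def poly_prod)

lemma is_sroot_root_poly:
  assumes "finite S"
  shows "is_sroot (root_poly e S) x \<longleftrightarrow> signed x \<and> (\<exists>i\<in>S. x = Pos (e i))"
proof -
  have factor: "balanced (Neg d + x) \<longleftrightarrow> x = Pos d" if "signed x" for d
    using that by (cases x) (auto simp: balanced_def signed_def)
  have "is_sroot (root_poly e S) x \<longleftrightarrow> signed x \<and> balanced (\<Prod>i\<in>S. Neg (e i) + x)"
    by (simp add: is_sroot_def bal_rel_def poly_root_poly zero_smax_def)
  also have "\<dots> \<longleftrightarrow> signed x \<and> (\<exists>i\<in>S. balanced (Neg (e i) + x))"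
    by (simp add: balanced_prod assms)
  also have "\<dots> \<longleftrightarrow> signed x \<and> (\<exists>i\<in>S. x = Pos (e i))"
    using factor by blast
  finally show ?thesis .
qed

definition sign_or_zero :: "bool \<Rightarrow> 'g::linordered_ab_group_add smax \<Rightarrow> bool" where
  "sign_or_zero pos x \<longleftrightarrow> x = 0 \<or> (\<exists>d. x = (if pos then Pos d else Neg d))"

lemma sign_or_zero_add: "sign_or_zero pos x \<Longrightarrow> sign_or_zero pos y \<Longrightarrow> sign_or_zero pos (x + y)"
  by (cases pos) (auto simp: sign_or_zero_def zero_smax_def)

lemma sign_or_zero_Neg_mult: "sign_or_zero pos x \<Longrightarrow> sign_or_zero (\<not> pos) (Neg c * x)"
  by (cases pos) (auto simp: sign_or_zero_def zero_smax_def)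

lemma signed_if_sign_or_zero: "sign_or_zero pos x \<Longrightarrow> signed x"
  by (cases pos) (auto simp: sign_or_zero_def signed_def zero_smax_def)

lemma coeff_root_poly_sign:
  assumes "finite S"
  shows "sign_or_zero (even (card S + k)) (coeff (root_poly e S) k)"
  using assms
proof (induction S arbitrary: k rule: finite_induct)
  case empty
  then show ?case
    by (simp add: root_poly_def sign_or_zero_def one_smax_def)
next
  case (insert x S)
  have "coeff (root_poly e (insert x S)) k =
      Neg (e x) * coeff (root_poly e S) k + (if k = 0 then 0 else coeff (root_poly e S) (k - 1))"
    by (cases k) (simp_all add: root_poly_insert[OF insert(1,2)])
  moreover have "sign_or_zero (even (card (insert x S) + k)) (Neg (e x) * coeff (root_poly e S) k)"
    using sign_or_zero_Neg_mult[OF insert.IH[of k]] insert(1,2) by simp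
  moreover have "sign_or_zero (even (card (insert x S) + k)) (coeff (root_poly e S) (k - 1))"
    if "k \<noteq> 0"
    using insert.IH[of "k - 1"] insert(1,2) that by (cases k) simp_all
  ultimately show ?case
    by (auto intro: sign_or_zero_add)
qed

lemma signed_root_poly: "signed_poly (root_poly e S)"
proof (cases "finite S")
  case True
  then show ?thesis
    using coeff_root_poly_sign signed_if_sign_or_zero by (blast intro: signed_poly_def[THEN iffD2])
next
  case False
  then show ?thesis
    by (simp add: root_poly_def signed_poly_def signed_def coeff_1 one_smax_def zero_smax_def)
qed

lemma card_insert_filter:
  assumes "finite S" "x \<notin> S"
  shows "card {i \<in> insert x S. P i} = card {i \<in> S. P i} + (if P x then 1 else 0)"
proof -
  have "{i \<in> insert x S. P i} = (if P x then insert x {i \<in> S. P i} else {i \<in> S. P i})"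
    by auto
  then show ?thesis
    using assms by simp
qed

lemma dominant_pterms_root_poly:
  assumes "finite S"
  shows "\<exists>L. \<forall>k. dominant (pterm (root_poly e S) (Pos c)) k \<longrightarrow>
    L \<le> k \<and> k \<le> L + card {i \<in> S. e i = c}"
  using assms
proof (induction S rule: finite_induct)
  case empty
  have "dominant (pterm (root_poly e {}) (Pos c)) k \<Longrightarrow> k = 0" for k
    by (cases k) (simp_all add: root_poly_def pterm_def dominant_def)
  then show ?case
    by auto
next
  case (insert x S)
  then obtain L where L: "\<forall>k. dominant (pterm (root_poly e S) (Pos c)) k \<longrightarrow>
      L \<le> k \<and> k \<le> L + card {i \<in> S. e i = c}"
    by blast
  let ?L = "if e x < c then Suc L else L"
  have "?L \<le> k \<and> k \<le> ?L + card {i \<in> insert x S. e i = c}"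
    if "dominant (pterm (root_poly e (insert x S)) (Pos c)) k" for k
    using dominant_pterm_linear_factor_cases[OF root_poly_ne_0
        that[unfolded root_poly_insert[OF insert(1,2)]]]
      L card_insert_filter[OF insert(1,2), of "\<lambda>i. e i = c"]
    by auto
  then show ?case
    by blast
qed

lemma poly_bal_refl: "poly_bal P P"
  by (simp add: poly_bal_def bal_refl)

lemma is_sroot_root_factor: "is_sroot ([:sminus (Pos c), 1:] * Q) (Pos c)"
proof -
  have "poly ([:sminus (Pos c), 1:] * Q) (Pos c) = Bal c * poly Q (Pos c)"
    by (simp only: poly_mult) (simp add: one_smax_def)
  then show ?thesis
    by (simp add: is_sroot_def bal_rel_def balanced_mult zero_smax_def) (simp add: balanced_def)
qed

lemma mult_ge_root_poly:
  assumes "finite S"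
  shows "mult_ge (root_poly e S) (Pos c) (card {i \<in> S. e i = c})"
proof -
  have "mult_ge (root_poly e S) (Pos c) m" if "finite S" "card {i \<in> S. e i = c} = m" for S m
    using that
  proof (induction m arbitrary: S)
    case 0
    show ?case
      by (rule mult_ge_0)
  next
    case (Suc m)
    then obtain i where i: "i \<in> S" "e i = c"
      by (metis (mono_tags, lifting) card.empty empty_Collect_eq nat.distinct(1))
    have "{j \<in> S - {i}. e j = c} = {j \<in> S. e j = c} - {i}"
      by auto
    then have "card {j \<in> S - {i}. e j = c} = m"
      using Suc.prems i by simp
    then have "mult_ge (root_poly e (S - {i})) (Pos c) m"
      using Suc.IH Suc.prems(1) by blast
    then have "mult_ge ([:sminus (Pos c), 1:] * root_poly e (S - {i})) (Pos c) (Suc m)"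
      by (rule mult_ge_Suc[OF is_sroot_root_factor signed_root_poly poly_bal_refl])
    moreover have "root_poly e S = [:sminus (Pos c), 1:] * root_poly e (S - {i})"
      using root_poly_insert[of "S - {i}" i e] Suc.prems(1) i by (simp add: insert_absorb)
    ultimately show ?case
      by simp
  qed
  then show ?thesis
    using assms by blast
qed

lemma root_mult_eqI:
  "mult_ge P r m \<Longrightarrow> (\<And>k. mult_ge P r k \<Longrightarrow> k \<le> m) \<Longrightarrow> root_mult P r = m"
  unfolding root_mult_def by (rule Greatest_equality)

lemma root_mult_eq_0: "\<not> is_sroot P r \<Longrightarrow> root_mult P r = 0"
  by (rule root_mult_eqI) (auto intro: mult_ge_0 elim: mult_ge.cases)

lemma root_mult_root_poly_Pos:
  assumes "finite S"
  shows "root_mult (root_poly e S) (Pos c) = card {i \<in> S. e i = c}"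
proof (rule root_mult_eqI[OF mult_ge_root_poly[OF assms]])
  fix m
  assume "mult_ge (root_poly e S) (Pos c) m"
  then obtain a b where ab: "a + m \<le> b"
      "dominant (pterm (root_poly e S) (Pos c)) a" "dominant (pterm (root_poly e S) (Pos c)) b"
    using mult_ge_dominant_spread signed_root_poly root_poly_ne_0 by blast
  obtain L where "\<forall>k. dominant (pterm (root_poly e S) (Pos c)) k \<longrightarrow>
      L \<le> k \<and> k \<le> L + card {i \<in> S. e i = c}"
    using dominant_pterms_root_poly[OF assms] by blast
  then have "L \<le> a" "b \<le> L + card {i \<in> S. e i = c}"
    using ab by blast+
  then show "m \<le> card {i \<in> S. e i = c}"
    using ab(1) by linarith
qed

lemma root_mult_root_poly:
  assumes "finite S"
  shows "root_mult (root_poly e S) x = card {i \<in> S. Pos (e i) = x}"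
proof (cases "\<exists>c. x = Pos c")
  case True
  then show ?thesis
    using root_mult_root_poly_Pos[OF assms] by auto
next
  case False
  then have "root_mult (root_poly e S) x = 0"
    by (simp add: root_mult_eq_0 is_sroot_root_poly assms)
  moreover have "{i \<in> S. Pos (e i) = x} = {}"
    using False by auto
  ultimately show ?thesis
    by (simp only: card.empty)
qed

section \<open>Tropical positive definite matrices\<close>

lemma qform_supported:
  assumes "U \<subseteq> {..<n}" "\<forall>k. k \<notin> U \<longrightarrow> x k = 0"
  shows "qform A n x = (\<Sum>k\<in>U. \<Sum>l\<in>U. x k * A k l * x l)"
proof -
  have "finite U"
    using assms(1) finite_subset by blast
  have "qform A n x = (\<Sum>k\<in>U. \<Sum>l<n. x k * A k l * x l)"
    unfolding qform_def using assms by (intro sum.mono_neutral_right) auto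
  also have "\<dots> = (\<Sum>k\<in>U. \<Sum>l\<in>U. x k * A k l * x l)"
    using assms by (intro sum.cong refl sum.mono_neutral_right) auto
  finally show ?thesis .
qed

lemma TPD_qform_pos:
  assumes "A \<in> TPD n" "\<forall>k<n. signed (x k)" "i < n" "x i \<noteq> 0"
  shows "\<exists>d. qform A n x = Pos d"
  using assms unfolding TPD_def sless_def by (auto simp: zero_smax_def)

lemma TPD_diag:
  fixes A :: "nat \<Rightarrow> nat \<Rightarrow> 'g::linordered_ab_group_add smax"
  assumes "A \<in> TPD n" "i < n"
  shows "A i i = Pos (smod (A i i))"
proof -
  define x where "x k = (if k = i then (1::'g smax) else 0)" for k
  have "qform A n x = A i i"
    using qform_supported[of "{i}" n x A] assms(2) by (simp add: x_def)
  moreover have "\<exists>d. qform A n x = Pos d"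
    using assms by (intro TPD_qform_pos[where i = i]) (auto simp: x_def one_smax_def signed_def)
  ultimately show ?thesis
    by auto
qed

lemma TPD_offdiag:
  fixes A :: "nat \<Rightarrow> nat \<Rightarrow> 'g::linordered_ab_group_add smax"
  assumes T: "A \<in> TPD n" and ij: "i < n" "j < n" "i \<noteq> j" and nz: "A i j \<noteq> 0"
  shows "smod (A i j) + smod (A i j) < smod (A i i) + smod (A j j)"
proof (rule ccontr)
  assume "\<not> ?thesis"
  then have le: "smod (A i i) + smod (A j j) \<le> smod (A i j) + smod (A i j)"
    by simp
  define ei ej a where "ei = smod (A i i)" and "ej = smod (A j j)" and "a = smod (A i j)"
  have Ai: "A i i = Pos ei" and Aj: "A j j = Pos ej"
    using TPD_diag[OF T] ij by (simp_all add: ei_def ej_def)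
  have sym: "A j i = A i j" and sg: "signed (A i j)"
    using T ij unfolding TPD_def by auto
  \<comment> \<open>chosen so that t a_ij = \<ominus>a_ii; then the form at e_i + t e_j is balanced\<close>
  define t where "t = (if A i j = Pos a then Neg (ei - a) else Pos (ei - a))"
  have tA: "t * A i j = Neg ei"
    using sg nz unfolding t_def a_def by (cases "A i j") (auto simp: signed_def zero_smax_def)
  have "(ei - a) + ej + (ei - a) \<le> ei"
  proof -
    have "(ei - a) + ej + (ei - a) = ei + ((ei + ej) - (a + a))"
      by (simp add: algebra_simps)
    moreover have "(ei + ej) - (a + a) \<le> 0"
      using le by (simp add: ei_def ej_def a_def)
    ultimately show ?thesis
      by (metis add_le_same_cancel1)
  qed
  moreover have "t * Pos ej * t = Pos ((ei - a) + ej + (ei - a))"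
    unfolding t_def by auto
  ultimately have balanced_sum: "(A i i + t * A i j) + (t * A i j + t * A j j * t) = Bal ei"
    using Ai Aj tA by (auto simp: max_def)
  define x where "x k = (if k = i then (1::'g smax) else if k = j then t else 0)" for k
  have "qform A n x = (A i i + t * A i j) + (t * A i j + t * A j j * t)"
    using qform_supported[of "{i, j}" n x A] ij sym by (simp add: x_def ac_simps)
  moreover have "\<exists>d. qform A n x = Pos d"
    using T ij by (intro TPD_qform_pos[where i = i]) (auto simp: x_def one_smax_def signed_def t_def)
  ultimately show False
    using balanced_sum by simp
qed

lemma permutes_support:
  assumes "p permutes S"
  shows "p permutes {x. p x \<noteq> x}"
proof (rule bij_imp_permutes)
  have inj: "inj p"
    using assms by (rule permutes_inj)
  have "p ` {x. p x \<noteq> x} = {x. p x \<noteq> x}"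
  proof (intro equalityI subsetI)
    fix y
    assume "y \<in> p ` {x. p x \<noteq> x}"
    then show "y \<in> {x. p x \<noteq> x}"
      using inj by (auto simp: inj_eq)
  next
    fix y
    assume y: "y \<in> {x. p x \<noteq> x}"
    have "y = p (inv p y)"
      using permutes_surj[OF assms] by (simp add: surj_f_inv_f)
    moreover have "p (inv p y) \<noteq> inv p y"
      using y calculation by auto
    ultimately show "y \<in> p ` {x. p x \<noteq> x}"
      by blast
  qed
  then show "bij_betw p {x. p x \<noteq> x} {x. p x \<noteq> x}"
    using inj by (simp add: bij_betw_def inj_on_subset[OF inj])
qed simp

lemma TPD_cycle_sum:
  fixes A :: "nat \<Rightarrow> nat \<Rightarrow> 'g::linordered_ab_group_add smax"
  assumes T: "A \<in> TPD n" and p: "p permutes {..<n}" "p \<noteq> id"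
    and nz: "\<forall>i\<in>{i. p i \<noteq> i}. A i (p i) \<noteq> 0"
  shows "(\<Sum>i | p i \<noteq> i. smod (A i (p i))) < (\<Sum>i | p i \<noteq> i. smod (A i i))"
proof -
  let ?D = "{i. p i \<noteq> i}" and ?e = "\<lambda>i. smod (A i i)" and ?a = "\<lambda>i. smod (A i (p i))"
  have D_sub: "?D \<subseteq> {..<n}"
    using permutes_not_in[OF p(1)] by auto
  then have fin: "finite ?D"
    using finite_subset by blast
  have ne: "?D \<noteq> {}"
    using p(2) by auto
  have "(\<Sum>i\<in>?D. ?a i + ?a i) < (\<Sum>i\<in>?D. ?e i + ?e (p i))"
  proof (rule sum_strict_mono[OF fin ne])
    fix i
    assume "i \<in> ?D"
    moreover have "p i < n"
      using permutes_in_image[OF p(1)] D_sub calculation by auto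
    ultimately show "?a i + ?a i < ?e i + ?e (p i)"
      using TPD_offdiag[OF T] D_sub nz by auto
  qed
  also have "\<dots> = (\<Sum>i\<in>?D. ?e i) + (\<Sum>i\<in>?D. ?e i)"
    using sum.permute[OF permutes_support[OF p(1)], of ?e] by (simp add: sum.distrib comp_def)
  finally show ?thesis
    by (simp add: sum.distrib) (meson add_mono not_le)
qed

definition charpoly_term ::
  "(nat \<Rightarrow> nat \<Rightarrow> 'g::linordered_ab_group_add smax) \<Rightarrow> nat \<Rightarrow> (nat \<Rightarrow> nat) \<Rightarrow> 'g smax poly" where
  "charpoly_term A n p = (if evenperm p then 1 else pminus 1) *
     (\<Prod>i<n. (if i = p i then [:0, 1:] else 0) + [:sminus (A i (p i)):])"

lemma charpoly_eq_sum_terms: "charpoly A n = (\<Sum>p | p permutes {..<n}. charpoly_term A n p)"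
  by (simp add: charpoly_def det_gen_def charpoly_term_def)

lemma not_mod_le_prod:
  fixes f g :: "'i \<Rightarrow> 'g::linordered_ab_group_add smax"
  assumes "finite D" "\<forall>i\<in>D. f i \<noteq> 0"
    and "\<forall>i\<in>D. g i \<noteq> 0 \<Longrightarrow> (\<Sum>i\<in>D. smod (g i)) < (\<Sum>i\<in>D. smod (f i))"
  shows "\<not> mod_le (prod f D) (prod g D)"
proof (cases "\<forall>i\<in>D. g i \<noteq> 0")
  case True
  then show ?thesis
    using smod_prod[of D f] smod_prod[of D g] assms by (simp add: mod_le_iff_smod)
next
  case False
  then show ?thesis
    using smod_prod[of D f] assms(1,2) by (auto simp: prod_zero)
qed

lemma TPD_charpoly_term_absorbed:
  fixes A :: "nat \<Rightarrow> nat \<Rightarrow> 'g::linordered_ab_group_add smax"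
  assumes T: "A \<in> TPD n" and p: "p permutes {..<n}" "p \<noteq> id"
  defines "e \<equiv> \<lambda>i. smod (A i i)"
  shows "root_poly e {..<n} + charpoly_term A n p = root_poly e {..<n}"
proof -
  define D where "D = {i. p i \<noteq> i}"
  define F where "F = {..<n} - D"
  define \<sigma> where "\<sigma> = (if evenperm p then 1 else sminus (1::'g smax))"
  define c where "c = \<sigma> * (\<Prod>i\<in>D. sminus (A i (p i)))"
  have D_sub: "D \<subseteq> {..<n}"
    using permutes_not_in[OF p(1)] by (auto simp: D_def)
  then have finD: "finite D"
    using finite_subset by blast
  have Aii: "A i i = Pos (e i)" if "i < n" for i
    using TPD_diag[OF T that] by (simp add: e_def)
  let ?M = "\<lambda>i. (if i = p i then [:0, 1:] else 0) + [:sminus (A i (p i)):]"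
  have "(\<Prod>i<n. ?M i) = (\<Prod>i\<in>F. ?M i) * (\<Prod>i\<in>D. ?M i)"
    unfolding F_def using prod.subset_diff[OF D_sub] by blast
  also have "(\<Prod>i\<in>F. ?M i) = (\<Prod>i\<in>F. [:Neg (e i), 1:])"
    by (rule prod.cong) (auto simp: F_def D_def Aii)
  also have "(\<Prod>i\<in>D. ?M i) = (\<Prod>i\<in>D. [:sminus (A i (p i)):])"
    by (rule prod.cong) (auto simp: D_def)
  finally have term_eq: "charpoly_term A n p = smult c (root_poly e F)"
    by (simp add: charpoly_term_def \<sigma>_def c_def root_poly_def prod_to_poly ac_simps
        pminus_def one_pCons map_poly_pCons)
  have R: "root_poly e {..<n} = root_poly e D * root_poly e F"
    unfolding root_poly_def F_def using prod.subset_diff[OF D_sub] by (simp add: mult.commute)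
  have "\<not> mod_le (\<Prod>i\<in>D. Neg (e i)) (\<Prod>i\<in>D. sminus (A i (p i)))"
    using finD TPD_cycle_sum[OF T p] by (intro not_mod_le_prod) (simp_all add: D_def e_def)
  then have "\<not> mod_le (coeff (root_poly e D) 0) c"
    by (simp add: c_def \<sigma>_def poly_0_coeff_0[symmetric] poly_root_poly zero_smax_def
        flip: sminus_mult)
  then show ?thesis
    unfolding term_eq R by (rule mult_add_smult_absorb)
qed

lemma charpoly_TPD:
  fixes A :: "nat \<Rightarrow> nat \<Rightarrow> 'g::linordered_ab_group_add smax"
  assumes T: "A \<in> TPD n"
  shows "charpoly A n = root_poly (\<lambda>i. smod (A i i)) {..<n}"
proof -
  define e where "e i = smod (A i i)" for i
  let ?P = "{p. p permutes {..<n}}"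
  have fin: "finite ?P"
    by (simp add: finite_permutations)
  have diag: "A i i = Pos (e i)" if "i < n" for i
    using TPD_diag[OF T that] by (simp add: e_def)
  have "charpoly_term A n id = root_poly e {..<n}"
    unfolding charpoly_term_def root_poly_def by (simp, rule prod.cong) (simp_all add: diag)
  then have "charpoly A n = root_poly e {..<n} + (\<Sum>p\<in>?P - {id}. charpoly_term A n p)"
    using sum.remove[OF fin, of id "charpoly_term A n"] permutes_id by (simp add: charpoly_eq_sum_terms)
  also have "\<dots> = root_poly e {..<n}"
    using fin TPD_charpoly_term_absorbed[OF T] by (intro add_sum_idem) (auto simp: e_def[abs_def])
  finally show ?thesis
    by (simp add: e_def[abs_def])
qed

lemma poly_charpoly:
  "poly (charpoly A n) x = sdet (\<lambda>i j. (if i = j then x else 0) + sminus (A i j)) n"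
proof -
  have "poly (if b then [:0, 1:] else 0) x = (if b then x else 0)" for b
    by simp
  moreover have "poly (pminus 1) x = sminus 1"
    by (simp add: pminus_def one_pCons map_poly_pCons)
  ultimately show ?thesis
    unfolding charpoly_def sdet_def det_gen_def poly_sum
    by (intro sum.cong) (auto simp: poly_prod)
qed

text \<open>The divisibility of the value group is not needed: the paper uses it only for the
  equivalent description of TPD by the entries, whereas TPD is defined here by the quadratic form.\<close>

theorem theorem4p12:
  fixes A :: "nat \<Rightarrow> nat \<Rightarrow> 'g::linordered_ab_group_add smax" and n :: nat
  assumes "divisible_group TYPE('g)"
    and "A \<in> TPD n"
  shows "{\<gamma>. s_eigenvalue A n \<gamma>} = {A i i | i. i < n} \<and>
    (\<forall>\<gamma>. signed \<gamma> \<longrightarrow> root_mult (charpoly A n) \<gamma> = card {i. i < n \<and> A i i = \<gamma>})"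
proof -
  define e where "e i = smod (A i i)" for i
  have diag: "A i i = Pos (e i)" if "i < n" for i
    using TPD_diag[OF assms(2) that] by (simp add: e_def)
  have charpoly: "charpoly A n = root_poly e {..<n}"
    using charpoly_TPD[OF assms(2)] by (simp add: e_def[abs_def])
  have "s_eigenvalue A n \<gamma> \<longleftrightarrow> (\<exists>i<n. \<gamma> = A i i)" for \<gamma>
    unfolding s_eigenvalue_def poly_charpoly[symmetric] charpoly
    using is_sroot_root_poly[of "{..<n}" e \<gamma>] diag by (auto simp: is_sroot_def)
  moreover have "root_mult (charpoly A n) \<gamma> = card {i. i < n \<and> A i i = \<gamma>}" for \<gamma>
  proof -
    have "{i. i < n \<and> A i i = \<gamma>} = {i \<in> {..<n}. Pos (e i) = \<gamma>}"
      using diag by auto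
    then show ?thesis
      by (simp add: charpoly root_mult_root_poly)
  qed
  ultimately show ?thesis
    by blast
qed

end
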